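(* Let $p$ be prime and let $V<W\le\mathbb F_p^k$ be subspaces with $\dim W=\dim V+1$. Let $x\in V^\perp\setminus W^\perp$ satisfy $|x|=\min_{v\in V^\perp\setminus W^\perp}|v|$. Then there is no $y\in V^\perp$ with $y\notin\langle x\rangle$ and $\mathrm{Supp}(y)\subseteq\mathrm{Supp}(x)$.
   Context: For $x\in\mathbb F_p^k$, $\mathrm{Supp}(x)=\{i: x_i\ne0\}$ and $|x|=|\mathrm{Supp}(x)|$. $V^\perp$ is the orthogonal complement under the standard dot product, and $\langle x\rangle$ is the span of $x$. *)

theory Defs
  imports "HOL-Analysis.Analysis"
begin

text \<open>Vectors in F^k are elements of 'a ^ 'n, where 'a is a finite field of prime
  cardinality p (hence isomorphic to F_p) and k = CARD('n).\<close>

definition dotp :: "'a::field ^ 'n \<Rightarrow> 'a ^ 'n \<Rightarrow> 'a" where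
  "dotp x y = (\<Sum>i\<in>UNIV. x $ i * y $ i)"

definition orth :: "('a::field ^ 'n) set \<Rightarrow> ('a ^ 'n) set" where
  "orth V = {y. \<forall>v\<in>V. dotp v y = 0}"

definition supp :: "'a::zero ^ 'n \<Rightarrow> 'n set" where
  "supp x = {i. x $ i \<noteq> 0}"

definition wt :: "'a::zero ^ 'n::finite \<Rightarrow> nat" where
  "wt x = card (supp x)"

end

theory Submission
  imports Defs
begin

text \<open>Suppose y \<in> orth V has support inside supp x but is not a multiple of x. Subtracting
  the multiple of x that kills one coordinate of y gives a nonzero z \<in> orth V with strictly
  smaller support. If z \<notin> orth W, this contradicts the minimality of x. If z \<in> orth W, then
  subtracting from x the multiple of z that kills one coordinate of x gives a vector of
  orth V - orth W, again of smaller support. The argument works over any field and for any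
  pair of subspaces T \<subseteq> S in place of orth W \<subseteq> orth V.\<close>

lemma subspace_orth: "vec.subspace (orth V)"
  unfolding vec.subspace_def orth_def dotp_def
  by (simp add: algebra_simps sum.distrib flip: sum_distrib_left)

lemma supp_eq_empty_iff: "supp x = {} \<longleftrightarrow> x = 0"
  by (auto simp: supp_def vec_eq_iff)

lemma wt_strict_mono: "supp z \<subset> supp x \<Longrightarrow> wt z < wt x"
  unfolding wt_def by (simp add: psubset_card_mono)

lemma supp_diff_eliminate:
  fixes x y :: "'a::field ^ 'n"
  assumes "i \<in> supp x"
  shows "supp (y - (y $ i / x $ i) *s x) \<subseteq> supp x \<union> supp y - {i}"
  using assms by (auto simp: supp_def)

lemma min_wt_no_smaller_supp:
  assumes "\<forall>v \<in> A. wt x \<le> wt v" and "w \<in> A"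
  shows "\<not> supp w \<subset> supp x"
  by (meson assms not_le wt_strict_mono)

lemma min_wt_diff_smaller_supp_eq_0:
  fixes S T :: "('a::field ^ 'n::finite) set"
  assumes S: "vec.subspace S" and T: "vec.subspace T"
    and x: "x \<in> S - T" and x_min: "\<forall>v \<in> S - T. wt x \<le> wt v"
    and z: "z \<in> S" "supp z \<subset> supp x"
  shows "z = 0"
proof (rule ccontr)
  assume "z \<noteq> 0"
  then obtain j where j: "j \<in> supp z"
    using supp_eq_empty_iff by blast
  have "z \<in> T"
    using min_wt_no_smaller_supp[OF x_min] z by blast
  define u where "u = x - (x $ j / z $ j) *s z"
  have "u \<in> S"
    unfolding u_def using S x z by (simp add: vec.subspace_diff vec.subspace_scale)
  moreover have "u \<notin> T"
  proof
    assume "u \<in> T"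
    then have "u + (x $ j / z $ j) *s z \<in> T"
      using T \<open>z \<in> T\<close> by (simp add: vec.subspace_add vec.subspace_scale)
    then show False
      using x unfolding u_def by simp
  qed
  moreover have "supp u \<subset> supp x"
    using supp_diff_eliminate[of j z x] z j unfolding u_def by blast
  ultimately show False
    using min_wt_no_smaller_supp[OF x_min] by blast
qed

lemma min_wt_diff_supp_subset_span:
  fixes S T :: "('a::field ^ 'n::finite) set"
  assumes S: "vec.subspace S" and T: "vec.subspace T"
    and x: "x \<in> S - T" and x_min: "\<forall>v \<in> S - T. wt x \<le> wt v"
    and y: "y \<in> S" "supp y \<subseteq> supp x"
  shows "y \<in> vec.span {x}"
proof -
  have "x \<noteq> 0"
    using x T vec.subspace_0 by blast
  then obtain i where i: "i \<in> supp x"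
    using supp_eq_empty_iff by blast
  define z where "z = y - (y $ i / x $ i) *s x"
  have "z \<in> S"
    unfolding z_def using S x y by (simp add: vec.subspace_diff vec.subspace_scale)
  moreover have "supp z \<subset> supp x"
    using supp_diff_eliminate[OF i, of y] y(2) i unfolding z_def by blast
  ultimately have "z = 0"
    using min_wt_diff_smaller_supp_eq_0[OF S T x x_min] by blast
  then have "y = (y $ i / x $ i) *s x"
    unfolding z_def by simp
  then show ?thesis
    by (metis vec.span_base vec.span_scale singletonI)
qed

theorem lemma7p3:
  fixes V W :: "('a::{field,finite} ^ 'n::finite) set" and x :: "'a ^ 'n"
  assumes "prime (CARD('a))"
    and "vec.subspace V" and "vec.subspace W"
    and "V \<subset> W"
    and "vec.dim W = vec.dim V + 1"
    and "x \<in> orth V - orth W"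
    and "\<forall>v \<in> orth V - orth W. wt x \<le> wt v"
  shows "\<not> (\<exists>y \<in> orth V. y \<notin> vec.span {x} \<and> supp y \<subseteq> supp x)"
  using min_wt_diff_supp_subset_span[OF subspace_orth subspace_orth assms(6,7)] by blast

end
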